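(* Let $D([0,1],\mathbb{C})$ be the space of càdlàg functions from $[0,1]$ to $\mathbb{C}$. Suppose $f_n\in D([0,1],\mathbb{C})$ converge uniformly to $f\in C([0,1],\mathbb{C})$. Then for every fixed $z\in\mathbb{C}$ with $|z|=1$ and $z\neq1$, $$\lim_{n\to\infty}\int_0^1f_n(t)\,z^{\lfloor nt\rfloor}\,dt=0.$$ *)

theory Defs
  imports "HOL-Analysis.Analysis"
begin

definition cadlag01 :: "(real \<Rightarrow> complex) \<Rightarrow> bool" where
  "cadlag01 f \<longleftrightarrow>
     (\<forall>t\<in>{0..<1}. (f \<longlongrightarrow> f t) (at_right t)) \<and>
     (\<forall>t\<in>{0<..1}. \<exists>l. (f \<longlongrightarrow> l) (at_left t))"

end

theory Submission
  imports Defs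
begin

text \<open>Write \<open>\<phi>\<^sub>n(t) = z^\<lfloor>nt\<rfloor>\<close>. Since \<open>\<phi>\<^sub>n(t + 1/n) = z \<phi>\<^sub>n(t)\<close>, shifting the variable of
  integration by \<open>1/n\<close> is a continuous summation by parts:
  \<open>(z - 1) \<integral>\<^sub>0\<^sup>1 F \<phi>\<^sub>n = z \<integral>\<^sub>0\<^sup>1 (F(t) - F(t + 1/n)) \<phi>\<^sub>n(t) dt + O(1/n)\<close>
  for any continuous extension \<open>F\<close> of \<open>f\<close> to \<open>[0,2]\<close>. The right-hand side tends to \<open>0\<close> by uniform
  continuity, and \<open>z \<noteq> 1\<close> lets us divide by \<open>z - 1\<close>. Replacing \<open>f\<close> by \<open>f\<^sub>n\<close> changes the
  integral by at most \<open>sup |f\<^sub>n - f|\<close>, since \<open>|\<phi>\<^sub>n| = 1\<close>.\<close>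

lemma norm_integral_Icc_le:
  fixes g :: "real \<Rightarrow> 'a::banach"
  assumes "a \<le> b" and "\<And>t. t \<in> {a..b} \<Longrightarrow> norm (g t) \<le> B"
  shows "norm (integral {a..b} g) \<le> B * (b - a)"
proof -
  have "0 \<le> B"
    using assms by (meson atLeastAtMost_iff norm_ge_zero order.trans order_refl)
  show ?thesis
  proof (cases "g integrable_on {a..b}")
    case True
    with \<open>0 \<le> B\<close> assms show ?thesis
      using has_integral_bound[of B g "integral {a..b} g" a b] by (auto simp: has_integral_integral)
  next
    case False
    with \<open>0 \<le> B\<close> assms show ?thesis by (simp add: not_integrable_integral)
  qed
qed

lemma norm_integral_perturbation_le:
  fixes g h w :: "real \<Rightarrow> 'a::{real_normed_algebra, banach}"
  assumes gw: "(\<lambda>t. g t * w t) integrable_on {a..b}" and "a \<le> b"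
    and d: "\<And>t. t \<in> {a..b} \<Longrightarrow> norm (h t - g t) \<le> d"
    and w: "\<And>t. t \<in> {a..b} \<Longrightarrow> norm (w t) \<le> 1"
  shows "norm (integral {a..b} (\<lambda>t. h t * w t)) \<le> norm (integral {a..b} (\<lambda>t. g t * w t)) + d * (b - a)"
proof -
  have "0 \<le> d"
    using d[of a] \<open>a \<le> b\<close> by (meson atLeastAtMost_iff norm_ge_zero order.trans order_refl)
  show ?thesis
  proof (cases "(\<lambda>t. h t * w t) integrable_on {a..b}")
    case True
    have "integral {a..b} (\<lambda>t. h t * w t)
        = integral {a..b} (\<lambda>t. g t * w t) + integral {a..b} (\<lambda>t. (h t - g t) * w t)"
      using integral_diff[OF True gw] by (simp add: algebra_simps)
    moreover have "norm (integral {a..b} (\<lambda>t. (h t - g t) * w t)) \<le> d * (b - a)"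
    proof (rule norm_integral_Icc_le[OF \<open>a \<le> b\<close>])
      fix t assume t: "t \<in> {a..b}"
      have "norm ((h t - g t) * w t) \<le> norm (h t - g t) * norm (w t)"
        by (rule norm_mult_ineq)
      also have "\<dots> \<le> d * 1"
        using \<open>0 \<le> d\<close> d[OF t] w[OF t] by (intro mult_mono) auto
      finally show "norm ((h t - g t) * w t) \<le> d" by simp
    qed
    ultimately show ?thesis by (simp add: norm_triangle_le)
  next
    case False
    with \<open>0 \<le> d\<close> \<open>a \<le> b\<close> show ?thesis by (simp add: not_integrable_integral)
  qed
qed

lemma eventually_dist_shift_lt:
  fixes F :: "real \<Rightarrow> 'a::metric_space"
  assumes "uniformly_continuous_on S F" and "0 < e"
  shows "\<forall>\<^sub>F n in sequentially. \<forall>x\<in>S. x + 1 / real n \<in> S \<longrightarrow> dist (F (x + 1 / real n)) (F x) < e"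
proof -
  obtain d where "0 < d" and d: "\<And>x y. x \<in> S \<Longrightarrow> y \<in> S \<Longrightarrow> dist y x < d \<Longrightarrow> dist (F y) (F x) < e"
    using assms unfolding uniformly_continuous_on_def by metis
  have "\<forall>\<^sub>F n in sequentially. 1 / real n < d"
    using order_tendstoD(2)[OF lim_1_over_n \<open>0 < d\<close>] by simp
  then show ?thesis
    by eventually_elim (auto intro!: d simp: dist_real_def)
qed

definition step_phase :: "complex \<Rightarrow> nat \<Rightarrow> real \<Rightarrow> complex" where
  "step_phase z n t = z ^ nat \<lfloor>real n * t\<rfloor>"

lemma norm_step_phase_le: "norm z \<le> 1 \<Longrightarrow> norm (step_phase z n t) \<le> 1"
  by (simp add: step_phase_def norm_power power_le_one)

lemma step_phase_shift:
  assumes "0 \<le> t" "n \<ge> 1"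
  shows "step_phase z n (t + 1 / real n) = z * step_phase z n t"
proof -
  have "\<lfloor>real n * (t + 1 / real n)\<rfloor> = \<lfloor>real n * t\<rfloor> + 1"
    using assms(2) by (simp add: distrib_left)
  moreover have "0 \<le> \<lfloor>real n * t\<rfloor>" using assms(1) by simp
  ultimately show ?thesis by (simp add: step_phase_def nat_add_distrib)
qed

lemma borel_measurable_step_phase: "step_phase z n \<in> borel_measurable borel"
  unfolding step_phase_def by measurable

lemma norm_times_step_phase_le:
  "norm z \<le> 1 \<Longrightarrow> norm w \<le> B \<Longrightarrow> norm (w * step_phase z n t) \<le> B"
  using norm_step_phase_le[of z n t] by (simp add: norm_mult) (metis mult_left_le norm_ge_zero order_trans)

lemma continuous_times_step_phase_integrable:
  fixes F :: "real \<Rightarrow> complex"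
  assumes F: "continuous_on {a..b} F" and z: "norm z \<le> 1"
  shows "(\<lambda>t. F t * step_phase z n t) integrable_on {a..b}"
proof -
  obtain M where M: "\<And>t. t \<in> {a..b} \<Longrightarrow> norm (F t) \<le> M"
    using compact_imp_bounded[OF compact_continuous_image[OF F]] by (force simp: bounded_iff)
  have "step_phase z n \<in> borel_measurable (lebesgue_on {a..b})"
    using borel_measurable_step_phase by (simp add: measurable_completion measurable_restrict_space1)
  then have "(\<lambda>t. F t * step_phase z n t) \<in> borel_measurable (lebesgue_on {a..b})"
    using continuous_imp_measurable_on_sets_lebesgue[OF F] by (intro borel_measurable_times) auto
  then show ?thesis
  proof (rule measurable_bounded_by_integrable_imp_integrable)
    show "norm (F t * step_phase z n t) \<le> M" if "t \<in> {a..b}" for t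
      using M[OF that] z by (rule norm_times_step_phase_le[rotated])
  qed auto
qed

lemma integral_step_phase_shift:
  fixes F :: "real \<Rightarrow> complex"
  assumes "n \<ge> 1"
  shows "integral {1 / real n..1 + 1 / real n} (\<lambda>t. F t * step_phase z n t)
           = z * integral {0..1} (\<lambda>t. F (t + 1 / real n) * step_phase z n t)"
proof -
  have "integral {1 / real n..1 + 1 / real n} (\<lambda>t. F t * step_phase z n t)
          = integral {0..1} (\<lambda>t. F (t + 1 / real n) * step_phase z n (t + 1 / real n))"
    using integral_shift_Icc_real[of 0 1 "\<lambda>t. F t * step_phase z n t" "1 / real n"]
    by (simp add: o_def add.commute)
  also have "\<dots> = integral {0..1} (\<lambda>t. z * (F (t + 1 / real n) * step_phase z n t))"
    using assms by (intro integral_cong) (simp add: step_phase_shift)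
  finally show ?thesis by simp
qed

lemma integral_step_phase_by_parts:
  fixes F :: "real \<Rightarrow> complex" and n :: nat
  defines "c \<equiv> 1 / real n"
  assumes F: "continuous_on {0..2} F" and z: "norm z \<le> 1" and n: "n \<ge> 1"
  shows "(z - 1) * integral {0..1} (\<lambda>t. F t * step_phase z n t)
           = z * integral {0..1} (\<lambda>t. (F t - F (t + c)) * step_phase z n t)
             + integral {1..1 + c} (\<lambda>t. F t * step_phase z n t)
             - integral {0..c} (\<lambda>t. F t * step_phase z n t)"
proof -
  define G where "G = (\<lambda>t. F t * step_phase z n t)"
  have c: "0 < c" "c \<le> 1" using n by (auto simp: c_def)
  have G_integrable: "G integrable_on {a..b}" if "{a..b} \<subseteq> {0..2}" for a b
    unfolding G_def using continuous_on_subset[OF F that] z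
    by (rule continuous_times_step_phase_integrable)
  have "(\<lambda>t. F (t + c) * step_phase z n t) integrable_on {0..1}"
    using c by (intro continuous_times_step_phase_integrable z continuous_on_compose2[OF F])
      (auto intro!: continuous_intros)
  from integral_diff[OF G_integrable[of 0 1] this]
  have "integral {0..1} (\<lambda>t. (F t - F (t + c)) * step_phase z n t)
      = integral {0..1} G - integral {0..1} (\<lambda>t. F (t + c) * step_phase z n t)"
    by (simp add: G_def left_diff_distrib)
  then have "z * integral {0..1} (\<lambda>t. (F t - F (t + c)) * step_phase z n t)
      = z * integral {0..1} G - integral {c..1 + c} G"
    using integral_step_phase_shift[OF n, of F z] by (simp add: G_def c_def right_diff_distrib)
  moreover have "integral {0..1} G = integral {0..c} G + integral {c..1} G"
    "integral {c..1 + c} G = integral {c..1} G + integral {1..1 + c} G"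
    using c by (auto intro!: Henstock_Kurzweil_Integration.integral_combine[symmetric] G_integrable)
  ultimately show ?thesis
    by (simp add: G_def algebra_simps)
qed

lemma norm_integral_step_phase_le:
  fixes F :: "real \<Rightarrow> complex"
  assumes F: "continuous_on {0..2} F" and z: "norm z \<le> 1" and n: "n \<ge> 1"
    and M: "\<And>t. t \<in> {0..2} \<Longrightarrow> norm (F t) \<le> M"
    and e: "\<And>t. t \<in> {0..1} \<Longrightarrow> norm (F t - F (t + 1 / real n)) \<le> e"
  shows "norm (z - 1) * norm (integral {0..1} (\<lambda>t. F t * step_phase z n t)) \<le> e + 2 * M / real n"
proof -
  define c where "c = 1 / real n"
  have c: "0 < c" "c \<le> 1" using n by (auto simp: c_def)
  have "norm (z * integral {0..1} (\<lambda>t. (F t - F (t + c)) * step_phase z n t))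
      \<le> norm (integral {0..1} (\<lambda>t. (F t - F (t + c)) * step_phase z n t))"
    using z by (simp add: norm_mult mult_left_le_one_le)
  also have "\<dots> \<le> e * (1 - 0)"
    using z e by (intro norm_integral_Icc_le norm_times_step_phase_le) (auto simp: c_def)
  finally have "norm (z * integral {0..1} (\<lambda>t. (F t - F (t + c)) * step_phase z n t)) \<le> e"
    by simp
  moreover have "norm (integral {1..1 + c} (\<lambda>t. F t * step_phase z n t)) \<le> M * c"
    "norm (integral {0..c} (\<lambda>t. F t * step_phase z n t)) \<le> M * c"
    using c z M by (auto intro!: norm_integral_Icc_le[THEN order_trans] norm_times_step_phase_le)
  ultimately have "norm ((z - 1) * integral {0..1} (\<lambda>t. F t * step_phase z n t)) \<le> e + M * c + M * c"
    unfolding integral_step_phase_by_parts[OF F z n, folded c_def]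
    by (smt (verit) norm_triangle_ineq4 norm_triangle_ineq)
  then show ?thesis by (simp add: c_def norm_mult)
qed

lemma integral_times_step_phase_tendsto_0:
  fixes f :: "real \<Rightarrow> complex"
  assumes f: "continuous_on {0..1} f" and z: "norm z \<le> 1" "z \<noteq> 1"
  shows "(\<lambda>n. integral {0..1} (\<lambda>t. f t * step_phase z n t)) \<longlonglongrightarrow> 0"
proof (rule tendstoI)
  fix r :: real assume "0 < r"
  define F where "F = ext_cont f 0 1"
  define e where "e = r * norm (z - 1) / 2"
  have "0 < e" using \<open>0 < r\<close> z by (simp add: e_def)
  have F: "continuous_on {0..2} F"
    unfolding F_def using f by (intro continuous_on_ext_cont) simp
  obtain M where M: "\<And>t. t \<in> {0..2} \<Longrightarrow> norm (F t) \<le> M"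
    using compact_imp_bounded[OF compact_continuous_image[OF F]] by (force simp: bounded_iff)
  have "uniformly_continuous_on {0..2} F"
    using F by (rule compact_uniformly_continuous) simp
  from eventually_dist_shift_lt[OF this \<open>0 < e\<close>]
  have "\<forall>\<^sub>F n in sequentially. \<forall>x\<in>{0..1}. norm (F x - F (x + 1 / real n)) \<le> e"
  proof eventually_elim
    case (elim n)
    have "1 / real n \<le> 1" by (cases n) auto
    then have "x + 1 / real n \<in> {0..2}" if "x \<in> {0..1}" for x
      using that by auto
    with elim show ?case by (fastforce simp: dist_norm norm_minus_commute less_imp_le)
  qed
  moreover have "\<forall>\<^sub>F n in sequentially. 2 * M / real n < e"
    using order_tendstoD(2)[OF lim_const_over_n \<open>0 < e\<close>] by simp
  moreover have "\<forall>\<^sub>F n in sequentially. n \<ge> 1"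
    by (rule eventually_ge_at_top)
  ultimately show "\<forall>\<^sub>F n in sequentially. dist (integral {0..1} (\<lambda>t. f t * step_phase z n t)) 0 < r"
  proof eventually_elim
    case (elim n)
    have "norm (z - 1) * norm (integral {0..1} (\<lambda>t. F t * step_phase z n t)) < norm (z - 1) * r"
    proof -
      have "norm (z - 1) * norm (integral {0..1} (\<lambda>t. F t * step_phase z n t)) \<le> e + 2 * M / real n"
        using elim(1) by (intro norm_integral_step_phase_le[OF F z(1) elim(3) M]) auto
      also have "\<dots> < norm (z - 1) * r"
        using elim(2) unfolding e_def by (simp add: field_simps)
      finally show ?thesis .
    qed
    moreover have "integral {0..1} (\<lambda>t. F t * step_phase z n t) = integral {0..1} (\<lambda>t. f t * step_phase z n t)"
      by (intro integral_cong) (simp add: F_def)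
    ultimately show ?case using z by simp
  qed
qed

theorem theorem13:
  fixes fn :: "nat \<Rightarrow> real \<Rightarrow> complex" and f :: "real \<Rightarrow> complex" and z :: complex
  assumes "\<And>n. cadlag01 (fn n)"
    and "continuous_on {0..1} f"
    and "uniform_limit {0..1} fn f sequentially"
    and "norm z = 1" and "z \<noteq> 1"
  shows "(\<lambda>n. integral {0..1} (\<lambda>t. fn n t * z ^ nat \<lfloor>real n * t\<rfloor>)) \<longlonglongrightarrow> 0"
  unfolding step_phase_def[symmetric]
proof (rule tendstoI)
  fix r :: real assume "0 < r"
  then have "0 < r / 2" by simp
  have "\<forall>\<^sub>F n in sequentially. norm (integral {0..1} (\<lambda>t. f t * step_phase z n t)) < r / 2"
    using tendstoD[OF integral_times_step_phase_tendsto_0[OF assms(2)] \<open>0 < r / 2\<close>] assms(4,5) by simp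
  moreover have "\<forall>\<^sub>F n in sequentially. \<forall>t\<in>{0..1}. dist (fn n t) (f t) < r / 2"
    using uniform_limitD[OF assms(3) \<open>0 < r / 2\<close>] .
  ultimately show "\<forall>\<^sub>F n in sequentially. dist (integral {0..1} (\<lambda>t. fn n t * step_phase z n t)) 0 < r"
  proof eventually_elim
    case (elim n)
    have "norm (integral {0..1} (\<lambda>t. fn n t * step_phase z n t))
        \<le> norm (integral {0..1} (\<lambda>t. f t * step_phase z n t)) + r / 2 * (1 - 0)"
      using elim(2) assms(4)
      by (intro norm_integral_perturbation_le continuous_times_step_phase_integrable assms(2))
        (auto simp: dist_norm less_imp_le norm_step_phase_le)
    with elim(1) show ?case by simp
  qed
qed

end
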